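(* Let $\ell\ge1$, $N=2^\ell$, let ${\mathbf x}_0,\dots,{\mathbf x}_{\omega-1}\in\mathbb{F}_2^\ell$ be distinct, and $D=P_{{\mathbf x}_0}+\cdots+P_{{\mathbf x}_{\omega-1}}$. Let $R$ be the number of ordered pairs $\big((u,v,w),(u',v',w')\big)$ of triples of indices in $\{0,\dots,\omega-1\}$ with $u\ne v$, $v\ne w$, $u'\ne v'$, $v'\ne w'$, $u\ne u'$, $w\ne w'$, and ${\mathbf x}_u+{\mathbf x}_v+{\mathbf x}_w={\mathbf x}_{u'}+{\mathbf x}_{v'}+{\mathbf x}_{w'}$. Then the number of $6$-cycles in the Tanner graph of $D$ is $\mathcal{N}_6=\dfrac{2^\ell}{6}\,R$.
   Context: Rows and columns of $N\times N$ binary matrices are indexed by $\mathbb{F}_2^\ell$ via ${\mathbf x}=(x_1,\dots,x_\ell)\leftrightarrow 1+\sum_i x_i2^{i-1}$. For ${\mathbf a}\in\mathbb{F}_2^\ell$, $P_{\mathbf a}$ is the $N\times N$ binary matrix with $(P_{\mathbf a})_{{\mathbf x},{\mathbf y}}=1$ iff ${\mathbf y}={\mathbf x}+{\mathbf a}$. The Tanner graph of a binary matrix is the bipartite graph with check nodes = rows, variable nodes = columns, edges at the $1$-entries. A $k$-cycle is a closed walk of $k$ edges with distinct vertices and distinct edges. *)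

theory Defs
  imports Complex_Main
begin

text \<open>Vectors of F_2^l are encoded by their index: x = (x_1,...,x_l) corresponds to the
natural number sum x_i 2^(i-1) in {0..<2^l} (the paper's index minus 1); vector addition
is bitwise xor.  A binary N x N matrix is a function nat => nat => nat on {0..<N}^2.\<close>

definition perm_mat :: "nat \<Rightarrow> nat \<Rightarrow> nat \<Rightarrow> nat" where
  "perm_mat a x y = (if y = xor x a then 1 else 0)"

definition sum_perm_mat :: "(nat \<Rightarrow> nat) \<Rightarrow> nat \<Rightarrow> nat \<Rightarrow> nat \<Rightarrow> nat" where
  "sum_perm_mat xs \<omega> x y = (\<Sum>i<\<omega>. perm_mat (xs i) x y)"

text \<open>Tanner graph of an N x N matrix H: check nodes Inl r, variable nodes Inr c,
edge between Inl r and Inr c iff H r c = 1.\<close>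
definition tanner_adj :: "nat \<Rightarrow> (nat \<Rightarrow> nat \<Rightarrow> nat) \<Rightarrow> nat + nat \<Rightarrow> nat + nat \<Rightarrow> bool" where
  "tanner_adj N H a b =
     (case (a, b) of
        (Inl r, Inr c) \<Rightarrow> r < N \<and> c < N \<and> H r c = 1
      | (Inr c, Inl r) \<Rightarrow> r < N \<and> c < N \<and> H r c = 1
      | _ \<Rightarrow> False)"

definition cycle_edges :: "(nat + nat) list \<Rightarrow> (nat + nat) set list" where
  "cycle_edges vs = map (\<lambda>i. {vs ! i, vs ! ((i + 1) mod length vs)}) [0..<length vs]"

definition is_cycle_walk :: "nat \<Rightarrow> (nat \<Rightarrow> nat \<Rightarrow> nat) \<Rightarrow> nat \<Rightarrow> (nat + nat) list \<Rightarrow> bool" where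
  "is_cycle_walk N H k vs \<longleftrightarrow>
     length vs = k \<and> k > 0 \<and> distinct vs \<and> distinct (cycle_edges vs) \<and>
     (\<forall>i<k. tanner_adj N H (vs ! i) (vs ! ((i + 1) mod k)))"

text \<open>Number of k-cycles: number of distinct cycles (as subgraphs, i.e. edge sets),
so that a cycle is not counted separately per starting point / direction.\<close>
definition num_cycles :: "nat \<Rightarrow> (nat \<Rightarrow> nat \<Rightarrow> nat) \<Rightarrow> nat \<Rightarrow> nat" where
  "num_cycles N H k = card {set (cycle_edges vs) | vs. is_cycle_walk N H k vs}"

definition R_count :: "(nat \<Rightarrow> nat) \<Rightarrow> nat \<Rightarrow> nat" where
  "R_count xs \<omega> = card {((u, v, w), (u', v', w')).
      u < \<omega> \<and> v < \<omega> \<and> w < \<omega> \<and> u' < \<omega> \<and> v' < \<omega> \<and> w' < \<omega> \<and>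
      u \<noteq> v \<and> v \<noteq> w \<and> u' \<noteq> v' \<and> v' \<noteq> w' \<and> u \<noteq> u' \<and> w \<noteq> w' \<and>
      xor (xor (xs u) (xs v)) (xs w) = xor (xor (xs u') (xs v')) (xs w')}"

end

theory Submission
  imports Defs
begin

text \<open>Label each edge of the Tanner graph of D by the index i with column = row + x_i. Read from
one of its three check nodes r in one of its two directions, a 6-cycle becomes the closed walk
r, r + x_u, r + x_u + x_v, r + x_u + x_v + x_w = r + x_u' + x_v' + x_w', r + x_u' + x_v', r + x_u'
with edge labels u, v, w, w', v', u'. Two vertices of the same side are joined through a common
neighbour, so they coincide exactly when the two labels at that neighbour do; hence the six
vertices are distinct iff cyclically adjacent labels differ, which are the conditions defining R.
So there are 2^l R rooted oriented 6-cycles, and every 6-cycle arises from exactly 6 of them.\<close>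

lemma xor_cancel_left [simp]: "xor a (xor a b) = (b::nat)"
  by (simp flip: xor.assoc)

lemma xor_cancel_right [simp]: "xor (xor a b) b = (a::nat)"
  by (simp add: xor.assoc)

lemma xor_left_cancel_iff [simp]: "xor a b = xor a c \<longleftrightarrow> (b::nat) = c"
  by (metis xor_cancel_left)

lemma xor_eq_swap: "(c::nat) = xor r a \<Longrightarrow> r = xor c a"
  by simp

lemma xor_less_two_power: "(x::nat) < 2 ^ l \<Longrightarrow> y < 2 ^ l \<Longrightarrow> xor x y < 2 ^ l"
  by (metis take_bit_nat_eq_self_iff take_bit_xor)

lemma card_eq_mult_card_image:
  assumes "finite A" and "\<And>b. b \<in> f ` A \<Longrightarrow> card {a\<in>A. f a = b} = k"
  shows "card A = k * card (f ` A)"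
proof -
  have "\<forall>a\<in>A. card {b\<in>f ` A. f a = b} = 1"
    by (auto simp: Collect_conj_eq Int_absorb2)
  then have "card A = (\<Sum>b\<in>f ` A. card {a\<in>A. f a = b})"
    using sum_multicount[of "f ` A" A "\<lambda>b a. f a = b" 1] assms(1) by simp
  also have "\<dots> = k * card (f ` A)"
    using assms(2) by simp
  finally show ?thesis .
qed

lemma cycle_edges_hexagon:
  "set (cycle_edges [a, b, c, d, e, f]) = {{a, b}, {b, c}, {c, d}, {d, e}, {e, f}, {f, a}}"
  by (simp add: cycle_edges_def upt_rec)

lemma is_cycle_walk_hexagon_iff:
  "is_cycle_walk N H 6 [a, b, c, d, e, f] \<longleftrightarrow> distinct [a, b, c, d, e, f] \<and>
     tanner_adj N H a b \<and> tanner_adj N H b c \<and> tanner_adj N H c d \<and>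
     tanner_adj N H d e \<and> tanner_adj N H e f \<and> tanner_adj N H f a"
proof -
  have edges: "cycle_edges [a, b, c, d, e, f] = [{a, b}, {b, c}, {c, d}, {d, e}, {e, f}, {f, a}]"
    by (simp add: cycle_edges_def upt_rec)
  have dist: "distinct [{a, b}, {b, c}, {c, d}, {d, e}, {e, f}, {f, a}]"
    if "distinct [a, b, c, d, e, f]"
    using that by (simp add: doubleton_eq_iff) blast
  have all6: "(\<forall>i<6. P i) \<longleftrightarrow> P 0 \<and> P 1 \<and> P 2 \<and> P 3 \<and> P 4 \<and> P (5::nat)" for P
    by (simp add: numeral_eq_Suc All_less_Suc conj_ac)
  have adj: "(\<forall>i<6. tanner_adj N H ([a, b, c, d, e, f] ! i) ([a, b, c, d, e, f] ! ((i + 1) mod 6)))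
      \<longleftrightarrow> tanner_adj N H a b \<and> tanner_adj N H b c \<and> tanner_adj N H c d \<and>
        tanner_adj N H d e \<and> tanner_adj N H e f \<and> tanner_adj N H f a"
    unfolding all6 by simp
  have "length [a, b, c, d, e, f] = 6" "(0::nat) < 6" by simp_all
  then show ?thesis
    unfolding is_cycle_walk_def edges adj using dist by blast
qed

lemma is_cycle_walk_6_obtain:
  assumes "is_cycle_walk N H 6 vs"
  obtains a b c d e f where "vs = [a, b, c, d, e, f]"
proof -
  have "length vs = 6" using assms by (simp add: is_cycle_walk_def)
  then show ?thesis using that by (auto simp: numeral_eq_Suc length_Suc_conv)
qed

lemma hexagon_determined_by_first_edge:
  assumes "length p = 6" "length q = 6" "distinct p" "distinct q"
    and "set (cycle_edges q) \<subseteq> set (cycle_edges p)" and "take 2 q = take 2 p"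
  shows "q = p"
proof -
  obtain a b c d e f where p: "p = [a, b, c, d, e, f]"
    using assms(1) by (auto simp: numeral_eq_Suc length_Suc_conv)
  obtain c' d' e' f' where q: "q = [a, b, c', d', e', f']"
    using assms(2,6) p by (auto simp: numeral_eq_Suc length_Suc_conv)
  have dist: "distinct [a, b, c, d, e, f]" "distinct [a, b, c', d', e', f']"
    using assms(3,4) p q by simp_all
  have edges: "{{b, c'}, {c', d'}, {d', e'}, {e', f'}} \<subseteq> {{a, b}, {b, c}, {c, d}, {d, e}, {e, f}, {f, a}}"
    using assms(5) unfolding p q cycle_edges_hexagon by simp
  have c: "c' = c" using dist edges by (auto simp: doubleton_eq_iff)
  have d: "d' = d" using dist edges unfolding c by (auto simp: doubleton_eq_iff)
  have e: "e' = e" using dist edges unfolding c d by (auto simp: doubleton_eq_iff)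
  have "f' = f" using dist edges unfolding c d e by (auto simp: doubleton_eq_iff)
  with c d e show ?thesis using p q by simp
qed

lemma tanner_adj_sym: "tanner_adj N H x y \<longleftrightarrow> tanner_adj N H y x"
  by (cases x; cases y) (auto simp: tanner_adj_def)

lemma tanner_adj_Inl_obtain:
  assumes "tanner_adj N H (Inl r) y"
  obtains c where "y = Inr c"
  using assms by (cases y) (auto simp: tanner_adj_def)

lemma tanner_adj_Inr_obtain:
  assumes "tanner_adj N H (Inr c) y"
  obtains r where "y = Inl r"
  using assms by (cases y) (auto simp: tanner_adj_def)

lemma tanner_adj_in_range:
  "tanner_adj N H x y \<Longrightarrow> x \<in> Inl ` {..<N} \<union> Inr ` {..<N}"
  by (cases x; cases y) (auto simp: tanner_adj_def)

lemma finite_cycle_walks: "finite {vs. is_cycle_walk N H k vs}"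
proof (rule finite_subset)
  show "{vs. is_cycle_walk N H k vs} \<subseteq>
      {vs. set vs \<subseteq> Inl ` {..<N} \<union> Inr ` {..<N} \<and> length vs = k}"
  proof (intro subsetI CollectI)
    fix vs assume "vs \<in> {vs. is_cycle_walk N H k vs}"
    then have "length vs = k" "\<forall>i<k. tanner_adj N H (vs ! i) (vs ! ((i + 1) mod k))"
      by (simp_all add: is_cycle_walk_def)
    then show "set vs \<subseteq> Inl ` {..<N} \<union> Inr ` {..<N} \<and> length vs = k"
      using tanner_adj_in_range by (fastforce simp: in_set_conv_nth)
  qed
  show "finite {vs. set vs \<subseteq> Inl ` {..<N} \<union> Inr ` {..<N} \<and> length vs = k}"
    by (rule finite_lists_length_eq) simp
qed

definition rooted_cycle_walks :: "nat \<Rightarrow> (nat \<Rightarrow> nat \<Rightarrow> nat) \<Rightarrow> nat \<Rightarrow> (nat + nat) list set" where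
  "rooted_cycle_walks N H k = {vs. is_cycle_walk N H k vs \<and> (\<exists>r. hd vs = Inl r)}"

lemma rooted_hexagon_shape:
  assumes "vs \<in> rooted_cycle_walks N H 6"
  obtains r0 c0 r1 c1 r2 c2 where "vs = [Inl r0, Inr c0, Inl r1, Inr c1, Inl r2, Inr c2]"
proof -
  have walk: "is_cycle_walk N H 6 vs" and "\<exists>r. hd vs = Inl r"
    using assms by (auto simp: rooted_cycle_walks_def)
  obtain a b c d e f where vs: "vs = [a, b, c, d, e, f]"
    using walk by (rule is_cycle_walk_6_obtain)
  obtain r0 where a: "a = Inl r0" using \<open>\<exists>r. hd vs = Inl r\<close> vs by auto
  have "tanner_adj N H a b" "tanner_adj N H b c" "tanner_adj N H c d"
    "tanner_adj N H d e" "tanner_adj N H e f"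
    using walk unfolding vs is_cycle_walk_hexagon_iff by simp_all
  then obtain c0 r1 c1 r2 c2
    where "b = Inr c0" "c = Inl r1" "d = Inr c1" "e = Inl r2" "f = Inr c2"
    unfolding a by (metis tanner_adj_Inl_obtain tanner_adj_Inr_obtain)
  with that show ?thesis unfolding vs a by blast
qed

lemma rooted_hexagons_with_same_edges:
  assumes vs: "vs = [Inl r0, Inr c0, Inl r1, Inr c1, Inl r2, Inr c2]"
    and walk: "is_cycle_walk N H 6 vs"
  shows "{ws \<in> rooted_cycle_walks N H 6. set (cycle_edges ws) = set (cycle_edges vs)} =
    {vs, [Inl r1, Inr c1, Inl r2, Inr c2, Inl r0, Inr c0], [Inl r2, Inr c2, Inl r0, Inr c0, Inl r1, Inr c1],
     [Inl r0, Inr c2, Inl r2, Inr c1, Inl r1, Inr c0], [Inl r1, Inr c0, Inl r0, Inr c2, Inl r2, Inr c1],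
     [Inl r2, Inr c1, Inl r1, Inr c0, Inl r0, Inr c2]}"
    (is "?F = ?S")
proof
  have dist: "distinct vs" and adj: "tanner_adj N H (Inl r0) (Inr c0)" "tanner_adj N H (Inr c0) (Inl r1)"
    "tanner_adj N H (Inl r1) (Inr c1)" "tanner_adj N H (Inr c1) (Inl r2)"
    "tanner_adj N H (Inl r2) (Inr c2)" "tanner_adj N H (Inr c2) (Inl r0)"
    using walk unfolding vs is_cycle_walk_hexagon_iff by blast+
  have candidates: "p \<in> rooted_cycle_walks N H 6 \<and> length p = 6 \<and> distinct p \<and>
      set (cycle_edges p) = set (cycle_edges vs)" if "p \<in> ?S" for p
    using that dist adj adj[THEN tanner_adj_sym[THEN iffD1]] unfolding vs
    by (elim insertE emptyE)
      (simp_all add: rooted_cycle_walks_def is_cycle_walk_hexagon_iff cycle_edges_hexagon insert_commute)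
  then show "?S \<subseteq> ?F" by blast
  show "?F \<subseteq> ?S"
  proof
    fix ws assume "ws \<in> ?F"
    then have ws: "ws \<in> rooted_cycle_walks N H 6" and edges: "set (cycle_edges ws) = set (cycle_edges vs)"
      by simp_all
    from ws obtain s0 d0 s1 d1 s2 d2 where ws_eq: "ws = [Inl s0, Inr d0, Inl s1, Inr d1, Inl s2, Inr d2]"
      by (rule rooted_hexagon_shape)
    have "{Inl s0, Inr d0} \<in> set (cycle_edges vs)"
      using edges unfolding ws_eq cycle_edges_hexagon by blast
    then have "(s0, d0) \<in> {(r0, c0), (r1, c1), (r2, c2), (r0, c2), (r1, c0), (r2, c1)}"
      unfolding vs cycle_edges_hexagon by (auto simp: doubleton_eq_iff)
    then have "\<exists>p\<in>?S. take 2 p = [Inl s0, Inr d0]"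
      by (elim insertE emptyE) (simp_all add: vs)
    moreover have "take 2 ws = [Inl s0, Inr d0]"
      unfolding ws_eq by simp
    ultimately obtain p where p: "p \<in> ?S" and first_edge: "take 2 ws = take 2 p"
      by metis
    have "length ws = 6" "distinct ws"
      using ws by (simp_all add: rooted_cycle_walks_def is_cycle_walk_def)
    moreover have "length p = 6" "distinct p" "set (cycle_edges p) = set (cycle_edges vs)"
      using candidates[OF p] by blast+
    ultimately have "ws = p"
      using edges first_edge by (metis hexagon_determined_by_first_edge order_refl)
    with \<open>p \<in> ?S\<close> show "ws \<in> ?S" by simp
  qed
qed

lemma cycles_eq_image_rooted_hexagons:
  "{set (cycle_edges vs) | vs. is_cycle_walk N H 6 vs} =
    (\<lambda>vs. set (cycle_edges vs)) ` rooted_cycle_walks N H 6"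
proof (intro equalityI subsetI)
  fix X assume "X \<in> {set (cycle_edges vs) | vs. is_cycle_walk N H 6 vs}"
  then obtain vs where walk: "is_cycle_walk N H 6 vs" and X: "X = set (cycle_edges vs)" by blast
  obtain a b c d e f where vs: "vs = [a, b, c, d, e, f]"
    using walk by (rule is_cycle_walk_6_obtain)
  show "X \<in> (\<lambda>vs. set (cycle_edges vs)) ` rooted_cycle_walks N H 6"
  proof (cases a)
    case (Inl r)
    then show ?thesis using walk X vs by (auto simp: rooted_cycle_walks_def)
  next
    case (Inr y)
    have "distinct (rotate1 vs)"
      using walk by (simp add: is_cycle_walk_def)
    then have "distinct [b, c, d, e, f, a]"
      by (simp only: vs rotate1.simps append.simps)
    moreover have "tanner_adj N H a b" "tanner_adj N H b c" "tanner_adj N H c d"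
      "tanner_adj N H d e" "tanner_adj N H e f" "tanner_adj N H f a"
      using walk unfolding vs is_cycle_walk_hexagon_iff by blast+
    moreover obtain r where "b = Inl r"
      using \<open>tanner_adj N H a b\<close> unfolding Inr by (rule tanner_adj_Inr_obtain)
    ultimately have "[b, c, d, e, f, a] \<in> rooted_cycle_walks N H 6"
      unfolding rooted_cycle_walks_def mem_Collect_eq is_cycle_walk_hexagon_iff by simp
    moreover have "set (cycle_edges [b, c, d, e, f, a]) = X"
      unfolding X vs cycle_edges_hexagon by (auto simp: insert_commute)
    ultimately show ?thesis by blast
  qed
qed (auto simp: rooted_cycle_walks_def)

lemma card_rooted_hexagons_eq_num_cycles: "card (rooted_cycle_walks N H 6) = 6 * num_cycles N H 6"
proof -
  have "finite (rooted_cycle_walks N H 6)"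
    using finite_cycle_walks by (rule finite_subset[rotated]) (auto simp: rooted_cycle_walks_def)
  moreover have "card {ws \<in> rooted_cycle_walks N H 6. set (cycle_edges ws) = X} = 6"
    if "X \<in> (\<lambda>vs. set (cycle_edges vs)) ` rooted_cycle_walks N H 6" for X
  proof -
    from that obtain vs where vs: "vs \<in> rooted_cycle_walks N H 6" and X: "X = set (cycle_edges vs)"
      by blast
    from vs obtain r0 c0 r1 c1 r2 c2 where vs_eq: "vs = [Inl r0, Inr c0, Inl r1, Inr c1, Inl r2, Inr c2]"
      by (rule rooted_hexagon_shape)
    have walk: "is_cycle_walk N H 6 vs" using vs by (simp add: rooted_cycle_walks_def)
    then have "distinct vs" by (simp add: is_cycle_walk_def)
    then show ?thesis
      unfolding X rooted_hexagons_with_same_edges[OF vs_eq walk] by (simp add: vs_eq)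
  qed
  ultimately show ?thesis
    unfolding num_cycles_def cycles_eq_image_rooted_hexagons by (rule card_eq_mult_card_image)
qed

locale dyadic_matrix =
  fixes l \<omega> :: nat and xs :: "nat \<Rightarrow> nat"
  assumes xs_less: "\<forall>i<\<omega>. xs i < 2 ^ l"
    and xs_inj: "inj_on xs {..<\<omega>}"
begin

abbreviation N :: nat where "N \<equiv> 2 ^ l"

abbreviation D :: "nat \<Rightarrow> nat \<Rightarrow> nat" where "D \<equiv> sum_perm_mat xs \<omega>"

lemma xs_eq_iff: "i < \<omega> \<Longrightarrow> j < \<omega> \<Longrightarrow> xs i = xs j \<longleftrightarrow> i = j"
  using xs_inj by (auto dest: inj_onD)

lemma xor_xs_less: "x < N \<Longrightarrow> i < \<omega> \<Longrightarrow> xor x (xs i) < N"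
  using xs_less by (simp add: xor_less_two_power)

lemma sum_perm_mat_eq_1_iff: "D r c = 1 \<longleftrightarrow> (\<exists>i<\<omega>. c = xor r (xs i))"
proof -
  let ?S = "{i \<in> {..<\<omega>}. c = xor r (xs i)}"
  have D_eq: "D r c = card ?S"
    unfolding sum_perm_mat_def perm_mat_def by (simp add: sum.If_cases Int_def)
  show ?thesis
  proof (cases "\<exists>i<\<omega>. c = xor r (xs i)")
    case True
    then obtain i where "i < \<omega>" "c = xor r (xs i)" by blast
    then have "?S = {i}" by (auto simp: xs_eq_iff)
    show ?thesis unfolding D_eq \<open>?S = {i}\<close> using True by simp
  next
    case False
    then have "?S = {}" by auto
    show ?thesis unfolding D_eq \<open>?S = {}\<close> using False by simp
  qed
qed

lemma tanner_adj_Inl_Inr_iff: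
  "tanner_adj N D (Inl r) (Inr c) \<longleftrightarrow> r < N \<and> (\<exists>i<\<omega>. c = xor r (xs i))"
proof -
  have "tanner_adj N D (Inl r) (Inr c) \<longleftrightarrow> r < N \<and> c < N \<and> D r c = 1"
    by (simp add: tanner_adj_def)
  then show ?thesis
    unfolding sum_perm_mat_eq_1_iff by (auto intro: xor_xs_less)
qed

lemma tanner_adj_Inr_Inl_iff:
  "tanner_adj N D (Inr c) (Inl r) \<longleftrightarrow> c < N \<and> (\<exists>i<\<omega>. r = xor c (xs i))"
  by (auto simp: tanner_adj_sym[of _ _ "Inr c"] tanner_adj_Inl_Inr_iff
      intro: xor_xs_less dest: xor_eq_swap)

lemma common_neighbour_eq_iff:
  "i < \<omega> \<Longrightarrow> j < \<omega> \<Longrightarrow> x = xor m (xs i) \<Longrightarrow> y = xor m (xs j) \<Longrightarrow> x = y \<longleftrightarrow> i = j"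
  by (simp add: xs_eq_iff)

lemma labelled_hexagon_is_cycle_walk_iff:
  assumes "r0 < N" and labels: "u < \<omega>" "v < \<omega>" "w < \<omega>" "w' < \<omega>" "v' < \<omega>" "u' < \<omega>"
    and steps: "c0 = xor r0 (xs u)" "r1 = xor c0 (xs v)" "c1 = xor r1 (xs w)"
      "r2 = xor c1 (xs w')" "c2 = xor r2 (xs v')" "r0 = xor c2 (xs u')"
  shows "is_cycle_walk N D 6 [Inl r0, Inr c0, Inl r1, Inr c1, Inl r2, Inr c2] \<longleftrightarrow>
    u \<noteq> v \<and> v \<noteq> w \<and> w \<noteq> w' \<and> w' \<noteq> v' \<and> v' \<noteq> u' \<and> u' \<noteq> u"
proof -
  note back_steps = steps[THEN xor_eq_swap]
  have "c0 < N" using \<open>r0 < N\<close> labels by (simp add: steps(1) xor_xs_less)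
  then have "r1 < N" using labels by (simp add: steps(2) xor_xs_less)
  then have "c1 < N" using labels by (simp add: steps(3) xor_xs_less)
  then have "r2 < N" using labels by (simp add: steps(4) xor_xs_less)
  then have "c2 < N" using labels by (simp add: steps(5) xor_xs_less)
  have adjacent: "tanner_adj N D (Inl r0) (Inr c0)" "tanner_adj N D (Inr c0) (Inl r1)"
      "tanner_adj N D (Inl r1) (Inr c1)" "tanner_adj N D (Inr c1) (Inl r2)"
      "tanner_adj N D (Inl r2) (Inr c2)" "tanner_adj N D (Inr c2) (Inl r0)"
    unfolding tanner_adj_Inl_Inr_iff tanner_adj_Inr_Inl_iff
    using \<open>r0 < N\<close> \<open>c0 < N\<close> \<open>r1 < N\<close> \<open>c1 < N\<close> \<open>r2 < N\<close> \<open>c2 < N\<close> labels steps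
    by blast+
  have "r0 = r1 \<longleftrightarrow> u = v" "r1 = r2 \<longleftrightarrow> w = w'" "r2 = r0 \<longleftrightarrow> v' = u'"
      "c0 = c1 \<longleftrightarrow> v = w" "c1 = c2 \<longleftrightarrow> w' = v'" "c2 = c0 \<longleftrightarrow> u' = u"
    using common_neighbour_eq_iff[OF _ _ back_steps(1) steps(2)]
      common_neighbour_eq_iff[OF _ _ back_steps(3) steps(4)]
      common_neighbour_eq_iff[OF _ _ back_steps(5) steps(6)]
      common_neighbour_eq_iff[OF _ _ back_steps(2) steps(3)]
      common_neighbour_eq_iff[OF _ _ back_steps(4) steps(5)]
      common_neighbour_eq_iff[OF _ _ back_steps(6) steps(1)]
      labels by simp_all
  then have "distinct [Inl r0, Inr c0, Inl r1, Inr c1, Inl r2, Inr c2] \<longleftrightarrow>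
      u \<noteq> v \<and> v \<noteq> w \<and> w \<noteq> w' \<and> w' \<noteq> v' \<and> v' \<noteq> u' \<and> u' \<noteq> u"
    by auto
  with adjacent show ?thesis
    by (simp add: is_cycle_walk_hexagon_iff)
qed

definition triple_pairs :: "((nat \<times> nat \<times> nat) \<times> (nat \<times> nat \<times> nat)) set" where
  "triple_pairs = {((u, v, w), (u', v', w')).
      u < \<omega> \<and> v < \<omega> \<and> w < \<omega> \<and> u' < \<omega> \<and> v' < \<omega> \<and> w' < \<omega> \<and>
      u \<noteq> v \<and> v \<noteq> w \<and> u' \<noteq> v' \<and> v' \<noteq> w' \<and> u \<noteq> u' \<and> w \<noteq> w' \<and>
      xor (xor (xs u) (xs v)) (xs w) = xor (xor (xs u') (xs v')) (xs w')}"

lemma R_count_eq_card_triple_pairs: "R_count xs \<omega> = card triple_pairs"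
  by (simp add: R_count_def triple_pairs_def)

text \<open>The walk from check node r along labels u, v, w and back to r along u', v', w'; its edge
from the fourth to the fifth vertex has label w' exactly when the two triples have equal sums.\<close>

definition hexagon_walk :: "nat \<Rightarrow> (nat \<times> nat \<times> nat) \<times> (nat \<times> nat \<times> nat) \<Rightarrow> (nat + nat) list" where
  "hexagon_walk r = (\<lambda>((u, v, w), (u', v', w')).
     [Inl r, Inr (xor r (xs u)), Inl (xor (xor r (xs u)) (xs v)),
      Inr (xor (xor (xor r (xs u)) (xs v)) (xs w)), Inl (xor (xor r (xs u')) (xs v')), Inr (xor r (xs u'))])"

lemma hexagon_walk_steps:
  assumes "xor (xor (xs u) (xs v)) (xs w) = xor (xor (xs u') (xs v')) (xs w')"
    and "hexagon_walk r ((u, v, w), (u', v', w')) = [Inl r0, Inr c0, Inl r1, Inr c1, Inl r2, Inr c2]"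
  shows "c0 = xor r0 (xs u)" "r1 = xor c0 (xs v)" "c1 = xor r1 (xs w)"
    "r2 = xor c1 (xs w')" "c2 = xor r2 (xs v')" "r0 = xor c2 (xs u')"
proof -
  have vertices: "r0 = r" "c0 = xor r (xs u)" "r1 = xor c0 (xs v)" "c1 = xor r1 (xs w)"
      "r2 = xor c2 (xs v')" "c2 = xor r (xs u')"
    using assms(2) by (auto simp: hexagon_walk_def)
  have "xor c1 (xs w') = xor r (xor (xor (xor (xs u) (xs v)) (xs w)) (xs w'))"
    unfolding vertices by (simp add: xor.assoc)
  also have "\<dots> = r2"
    unfolding vertices assms(1) by (simp add: xor.assoc)
  finally show "r2 = xor c1 (xs w')" ..
  show "c0 = xor r0 (xs u)" "r1 = xor c0 (xs v)" "c1 = xor r1 (xs w)"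
    "c2 = xor r2 (xs v')" "r0 = xor c2 (xs u')"
    using vertices by simp_all
qed

lemma hexagon_walk_in_rooted_cycle_walks:
  assumes "r < N" and "((u, v, w), (u', v', w')) \<in> triple_pairs"
  shows "hexagon_walk r ((u, v, w), (u', v', w')) \<in> rooted_cycle_walks N D 6"
proof -
  have labels: "u < \<omega>" "v < \<omega>" "w < \<omega>" "w' < \<omega>" "v' < \<omega>" "u' < \<omega>"
    and distinct_labels: "u \<noteq> v \<and> v \<noteq> w \<and> w \<noteq> w' \<and> w' \<noteq> v' \<and> v' \<noteq> u' \<and> u' \<noteq> u"
    and closing: "xor (xor (xs u) (xs v)) (xs w) = xor (xor (xs u') (xs v')) (xs w')"
    using assms(2) by (auto simp: triple_pairs_def)
  obtain c0 r1 c1 r2 c2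
    where hex: "hexagon_walk r ((u, v, w), (u', v', w')) = [Inl r, Inr c0, Inl r1, Inr c1, Inl r2, Inr c2]"
    by (simp add: hexagon_walk_def)
  have "is_cycle_walk N D 6 [Inl r, Inr c0, Inl r1, Inr c1, Inl r2, Inr c2]"
    using labelled_hexagon_is_cycle_walk_iff[OF \<open>r < N\<close> labels hexagon_walk_steps[OF closing hex]]
      distinct_labels by blast
  then show ?thesis
    unfolding hex by (simp add: rooted_cycle_walks_def)
qed

lemma rooted_hexagon_obtain_hexagon_walk:
  assumes "vs \<in> rooted_cycle_walks N D 6"
  obtains r t where "r < N" "t \<in> triple_pairs" "vs = hexagon_walk r t"
proof -
  obtain r0 c0 r1 c1 r2 c2 where vs: "vs = [Inl r0, Inr c0, Inl r1, Inr c1, Inl r2, Inr c2]"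
    using assms by (rule rooted_hexagon_shape)
  have walk: "is_cycle_walk N D 6 [Inl r0, Inr c0, Inl r1, Inr c1, Inl r2, Inr c2]"
    using assms vs by (simp add: rooted_cycle_walks_def)
  then have "tanner_adj N D (Inl r0) (Inr c0)" "tanner_adj N D (Inr c0) (Inl r1)"
      "tanner_adj N D (Inl r1) (Inr c1)" "tanner_adj N D (Inr c1) (Inl r2)"
      "tanner_adj N D (Inl r2) (Inr c2)" "tanner_adj N D (Inr c2) (Inl r0)"
    unfolding is_cycle_walk_hexagon_iff by blast+
  then obtain u v w w' v' u' where "r0 < N"
    and labels: "u < \<omega>" "v < \<omega>" "w < \<omega>" "w' < \<omega>" "v' < \<omega>" "u' < \<omega>"
    and steps: "c0 = xor r0 (xs u)" "r1 = xor c0 (xs v)" "c1 = xor r1 (xs w)"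
      "r2 = xor c1 (xs w')" "c2 = xor r2 (xs v')" "r0 = xor c2 (xs u')"
    unfolding tanner_adj_Inl_Inr_iff tanner_adj_Inr_Inl_iff by blast
  note back_steps = steps[THEN xor_eq_swap]
  have "u \<noteq> v \<and> v \<noteq> w \<and> w \<noteq> w' \<and> w' \<noteq> v' \<and> v' \<noteq> u' \<and> u' \<noteq> u"
    using labelled_hexagon_is_cycle_walk_iff[OF \<open>r0 < N\<close> labels steps] walk by blast
  moreover have "xor r0 (xor (xor (xs u) (xs v)) (xs w)) = xor r0 (xor (xor (xs u') (xs v')) (xs w'))"
  proof -
    have "xor r0 (xor (xor (xs u) (xs v)) (xs w)) = c1"
      using steps(1-3) by (simp add: xor.assoc)
    also have "\<dots> = xor r0 (xor (xor (xs u') (xs v')) (xs w'))"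
      using back_steps(4-6) by (simp add: xor.assoc)
    finally show ?thesis .
  qed
  ultimately have "((u, v, w), (u', v', w')) \<in> triple_pairs"
    using labels by (auto simp: triple_pairs_def)
  moreover have "vs = hexagon_walk r0 ((u, v, w), (u', v', w'))"
    using vs steps(1-3) back_steps(5,6) by (simp add: hexagon_walk_def)
  ultimately show ?thesis
    using that \<open>r0 < N\<close> by blast
qed

lemma hexagon_walk_labels_determined:
  assumes "t \<in> triple_pairs" "t' \<in> triple_pairs" and eq: "hexagon_walk r t = hexagon_walk r t'"
  shows "t = t'"
proof -
  obtain u v w u' v' w' x y z x' y' z'
    where t: "t = ((u, v, w), (u', v', w'))" and t': "t' = ((x, y, z), (x', y', z'))"
    by (metis prod.collapse)
  obtain c0 r1 c1 r2 c2 where hex: "hexagon_walk r t = [Inl r, Inr c0, Inl r1, Inr c1, Inl r2, Inr c2]"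
    by (simp add: hexagon_walk_def t)
  have closing: "xor (xor (xs u) (xs v)) (xs w) = xor (xor (xs u') (xs v')) (xs w')"
      "xor (xor (xs x) (xs y)) (xs z) = xor (xor (xs x') (xs y')) (xs z')"
    and labels: "u < \<omega>" "v < \<omega>" "w < \<omega>" "u' < \<omega>" "v' < \<omega>" "w' < \<omega>"
      "x < \<omega>" "y < \<omega>" "z < \<omega>" "x' < \<omega>" "y' < \<omega>" "z' < \<omega>"
    using assms(1,2) by (simp_all add: t t' triple_pairs_def)
  note steps = hexagon_walk_steps[OF closing(1) hex[unfolded t]]
    and steps' = hexagon_walk_steps[OF closing(2) hex[unfolded eq t']]
  have "u = x" "v = y" "w = z" "w' = z'" "v' = y'" "u' = x'"
    using common_neighbour_eq_iff[OF _ _ steps(1) steps'(1)]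
      common_neighbour_eq_iff[OF _ _ steps(2) steps'(2)]
      common_neighbour_eq_iff[OF _ _ steps(3) steps'(3)]
      common_neighbour_eq_iff[OF _ _ steps(4) steps'(4)]
      common_neighbour_eq_iff[OF _ _ steps(5) steps'(5)]
      common_neighbour_eq_iff[OF _ _ steps(6) steps'(6)]
      labels by simp_all
  then show ?thesis
    unfolding t t' by simp
qed

lemma hd_hexagon_walk: "hd (hexagon_walk r t) = Inl r"
  by (simp add: hexagon_walk_def split: prod.split)

lemma inj_on_hexagon_walk: "inj_on (case_prod hexagon_walk) ({..<N} \<times> triple_pairs)"
proof (rule inj_onI)
  fix p q
  assume "p \<in> {..<N} \<times> triple_pairs" "q \<in> {..<N} \<times> triple_pairs"
    and eq: "case_prod hexagon_walk p = case_prod hexagon_walk q"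
  moreover have "fst p = fst q"
    using arg_cong[OF eq, of hd] by (simp add: hd_hexagon_walk split: prod.split_asm)
  ultimately show "p = q"
    using hexagon_walk_labels_determined by (metis mem_Times_iff prod.collapse split_beta)
qed

lemma rooted_hexagons_eq_image_hexagon_walk:
  "rooted_cycle_walks N D 6 = case_prod hexagon_walk ` ({..<N} \<times> triple_pairs)"
proof
  show "rooted_cycle_walks N D 6 \<subseteq> case_prod hexagon_walk ` ({..<N} \<times> triple_pairs)"
  proof
    fix vs assume "vs \<in> rooted_cycle_walks N D 6"
    then obtain r t where "r < N" "t \<in> triple_pairs" "vs = hexagon_walk r t"
      by (rule rooted_hexagon_obtain_hexagon_walk)
    then show "vs \<in> case_prod hexagon_walk ` ({..<N} \<times> triple_pairs)"
      by (auto intro: rev_image_eqI[of "(r, t)"])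
  qed
  show "case_prod hexagon_walk ` ({..<N} \<times> triple_pairs) \<subseteq> rooted_cycle_walks N D 6"
    using hexagon_walk_in_rooted_cycle_walks by auto
qed

lemma card_rooted_hexagons_eq_R_count: "card (rooted_cycle_walks N D 6) = N * R_count xs \<omega>"
  unfolding rooted_hexagons_eq_image_hexagon_walk card_image[OF inj_on_hexagon_walk]
  by (simp add: card_cartesian_product R_count_eq_card_triple_pairs)

end

theorem mainTheorem13:
  fixes l \<omega> :: nat and xs :: "nat \<Rightarrow> nat"
  assumes "l \<ge> 1"
    and "\<forall>i<\<omega>. xs i < 2 ^ l"
    and "inj_on xs {..<\<omega>}"
  shows "real (num_cycles (2 ^ l) (sum_perm_mat xs \<omega>) 6) = (2 ^ l / 6) * real (R_count xs \<omega>)"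
proof -
  interpret dyadic_matrix l \<omega> xs
    using assms(2,3) by unfold_locales
  have "6 * num_cycles N D 6 = N * R_count xs \<omega>"
    using card_rooted_hexagons_eq_num_cycles[of N D] card_rooted_hexagons_eq_R_count by simp
  then have "6 * real (num_cycles N D 6) = 2 ^ l * real (R_count xs \<omega>)"
    by (metis of_nat_mult of_nat_numeral of_nat_power)
  then show ?thesis by simp
qed

end
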